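(* Consider the one-hop wireless network model described in the context, where the channel powers $\gamma_{i,j}$ are i.i.d. with the Gamma distribution (Nakagami-$m$ fading) with p.d.f. $f(x)=x^{m-1}\frac{e^{-mx/\Omega}}{\Gamma(m)(\Omega/m)^m}$ and c.d.f. $F(x)=\gamma(m,mx/\Omega)/\Gamma(m)$ for $x\ge 0$, where $m,\Omega>0$ are parameters, $\Gamma(\cdot)$ is the Gamma function and $\gamma(\cdot,\cdot)$ the lower incomplete Gamma function. Then, with high probability, the achievable throughput (obtained by activating the source-destination pairs with the largest direct-link powers and silencing the rest) satisfies $T=\Omega(\log n)$.
   Context: Network model: $n$ sources $S_1,\dots,S_n$ and $n$ destinations $D_1,\dots,D_n$; $S_i$ wishes to communicate with $D_i$ in one hop. The channel power from $S_i$ to $D_j$ is $\gamma_{i,j}\ge0$; all $\gamma_{i,j}$ are i.i.d. with mean $\mu$. A subset $\mathbb{S}$ of sources is active, each with power $1$; $SINR_i=\frac{\gamma_{i,i}}{N_0+\sum_{S_k\in\mathbb{S},k\ne i}\gamma_{k,i}}$ for $S_i\in\mathbb{S}$ (and $0$ otherwise), with noise variance $N_0\ge0$; $D_i$ succeeds if $SINR_i>\beta$ for a fixed constant $\beta>0$. The throughput $T$ is the number of successful destinations. "With high probability" means with probability tending to $1$ as $n\to\infty$. *)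

theory Defs
  imports "HOL-Probability.Probability"
begin

definition gamma_pdf :: "real \<Rightarrow> real \<Rightarrow> real \<Rightarrow> real" where
  "gamma_pdf m \<Omega> x =
     (if 0 \<le> x then x powr (m - 1) * exp (- m * x / \<Omega>) / (Gamma m * (\<Omega> / m) powr m) else 0)"

definition nakagami_power :: "real \<Rightarrow> real \<Rightarrow> real measure" where
  "nakagami_power m \<Omega> = density lborel (\<lambda>x. ennreal (gamma_pdf m \<Omega> x))"

definition channel_space :: "real \<Rightarrow> real \<Rightarrow> nat \<Rightarrow> (nat \<times> nat \<Rightarrow> real) measure" where
  "channel_space m \<Omega> n = PiM ({..<n} \<times> {..<n}) (\<lambda>_. nakagami_power m \<Omega>)"

definition SINR :: "(nat \<times> nat \<Rightarrow> real) \<Rightarrow> real \<Rightarrow> nat set \<Rightarrow> nat \<Rightarrow> real" where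
  "SINR g N0 S i = (if i \<in> S then g (i, i) / (N0 + (\<Sum>k\<in>S - {i}. g (k, i))) else 0)"

definition throughput :: "nat \<Rightarrow> (nat \<times> nat \<Rightarrow> real) \<Rightarrow> real \<Rightarrow> real \<Rightarrow> nat set \<Rightarrow> nat" where
  "throughput n g N0 \<beta> S = card {i \<in> {..<n}. SINR g N0 S i > \<beta>}"

definition top_direct_set :: "nat \<Rightarrow> (nat \<times> nat \<Rightarrow> real) \<Rightarrow> nat \<Rightarrow> nat set \<Rightarrow> bool" where
  "top_direct_set n g k S \<longleftrightarrow> S \<subseteq> {..<n} \<and> card S = k \<and>
     (\<forall>i\<in>S. \<forall>j\<in>{..<n} - S. g (j, j) \<le> g (i, i))"

end

theory Submission
  imports Defs "HOL-Real_Asymp.Real_Asymp"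
begin

text \<open>
  Fix \<open>p = l ln n / n\<close> and the threshold \<open>T\<close> with \<open>P(\<gamma> > T) = p\<close>; call link \<open>i\<close> strong
  if \<open>\<gamma>(i,i) > T\<close>. A Chernoff bound shows that w.h.p. at least \<open>k = \<lceil>(l/4) ln n\<rceil>\<close> links are
  strong, so the \<open>k\<close> strongest links are all strong. An exponential Markov bound, using the finite
  moment generating function \<open>E exp (s \<gamma>) = M\<close>, shows that w.h.p. every strong destination receives
  at most \<open>T/\<beta> - N0\<close> interference from the other strong sources, and then all \<open>k\<close> active pairs
  have SINR above \<open>\<beta>\<close>. This failure probability is at most \<open>n p exp (s N0 + n p M - s T/\<beta>)\<close>;
  the exponential lower bound \<open>t exp (- a x)\<close> on the Gamma tail gives
  \<open>exp (- s T/\<beta>) \<le> (p/t) powr (s/(a \<beta>))\<close>, which beats \<open>exp (n p M) = n powr (l M)\<close> once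
  \<open>l M \<le> s/(2 a \<beta>)\<close>.
\<close>

section \<open>The Gamma law of the channel powers\<close>

lemma gamma_pdf_borel_measurable [measurable]: "gamma_pdf m \<Omega> \<in> borel_measurable borel"
  unfolding gamma_pdf_def[abs_def] by measurable

lemma nn_integral_powr_exp_kernel:
  fixes m b :: real
  assumes m: "0 < m" and b: "0 < b"
  shows "(\<integral>\<^sup>+x. ennreal (indicator {0..} x * x powr (m - 1) * exp (- b * x)) \<partial>lborel)
    = ennreal (Gamma m / b powr m)"
proof -
  have "(\<integral>\<^sup>+x. ennreal (indicator {0..} x * x powr (m - 1) * exp (- b * x)) \<partial>lborel)
    = ennreal \<bar>1/b\<bar> * (\<integral>\<^sup>+x. ennreal (indicator {0..} (0 + 1/b * x) * (0 + 1/b * x) powr (m - 1)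
        * exp (- b * (0 + 1/b * x))) \<partial>lborel)"
    by (rule nn_integral_real_affine) (use b in auto)
  also have "(\<lambda>x. ennreal (indicator {0..} (0 + 1/b * x) * (0 + 1/b * x) powr (m - 1) * exp (- b * (0 + 1/b * x))))
     = (\<lambda>x. ennreal (b powr (1 - m)) * ennreal (indicator {0..} x * x powr (m - 1) / exp x))"
  proof
    fix x :: real
    show "ennreal (indicator {0..} (0 + 1/b * x) * (0 + 1/b * x) powr (m - 1) * exp (- b * (0 + 1/b * x)))
      = ennreal (b powr (1 - m)) * ennreal (indicator {0..} x * x powr (m - 1) / exp x)"
    proof (cases "0 \<le> x")
      case True
      have "(x/b) powr (m - 1) = b powr (1 - m) * x powr (m - 1)"
        using b True by (simp add: powr_divide powr_minus_divide divide_simps powr_diff)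
      then show ?thesis
        using True b by (simp add: indicator_def ennreal_mult'[symmetric] exp_minus field_simps)
    next
      case False
      then have "\<not> 0 \<le> x/b" using b by (simp add: divide_simps)
      then show ?thesis using False by (simp add: indicator_def)
    qed
  qed
  also have "(\<integral>\<^sup>+x. ennreal (b powr (1 - m)) * ennreal (indicator {0..} x * x powr (m - 1) / exp x) \<partial>lborel)
     = ennreal (b powr (1 - m)) * ennreal (Gamma m)"
    by (subst nn_integral_cmult) (auto simp: Gamma_conv_nn_integral_real[OF m])
  also have "ennreal \<bar>1/b\<bar> * (ennreal (b powr (1 - m)) * ennreal (Gamma m)) = ennreal (Gamma m / b powr m)"
    using b m Gamma_real_pos[OF m] by (simp add: ennreal_mult'[symmetric] powr_diff divide_simps)
  finally show ?thesis .
qed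

context
  fixes m \<Omega> :: real
  assumes m: "0 < m" and \<Omega>: "0 < \<Omega>"
begin

lemma sets_nakagami_power [simp, measurable_cong]: "sets (nakagami_power m \<Omega>) = sets borel"
  by (simp add: nakagami_power_def)

lemma space_nakagami_power [simp]: "space (nakagami_power m \<Omega>) = UNIV"
  by (simp add: nakagami_power_def)

lemma nn_integral_exp_nakagami_power:
  assumes s: "s < m / \<Omega>"
  shows "(\<integral>\<^sup>+x. ennreal (exp (s * x)) \<partial>nakagami_power m \<Omega>) = ennreal ((m / (m - s * \<Omega>)) powr m)"
proof -
  define b where "b = m / \<Omega> - s"
  have b: "0 < b" using s by (simp add: b_def)
  define Z where "Z = Gamma m * (\<Omega> / m) powr m"
  have Z: "0 < Z" using m \<Omega> Gamma_real_pos[OF m] by (simp add: Z_def)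
  have "(\<integral>\<^sup>+x. ennreal (exp (s * x)) \<partial>nakagami_power m \<Omega>)
      = (\<integral>\<^sup>+x. ennreal (gamma_pdf m \<Omega> x) * ennreal (exp (s * x)) \<partial>lborel)"
    unfolding nakagami_power_def by (subst nn_integral_density) auto
  also have "\<dots> = (\<integral>\<^sup>+x. ennreal (1/Z) * ennreal (indicator {0..} x * x powr (m - 1) * exp (- b * x)) \<partial>lborel)"
  proof (rule nn_integral_cong)
    fix x
    have "exp (- m * x / \<Omega>) * exp (s * x) = exp (- b * x)"
      by (simp add: b_def mult_exp_exp algebra_simps)
    then show "ennreal (gamma_pdf m \<Omega> x) * ennreal (exp (s * x))
      = ennreal (1/Z) * ennreal (indicator {0..} x * x powr (m - 1) * exp (- b * x))"
      using Z by (auto simp: gamma_pdf_def indicator_def Z_def ennreal_mult'[symmetric] field_simps)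
  qed
  also have "\<dots> = ennreal (1/Z) * ennreal (Gamma m / b powr m)"
    using nn_integral_powr_exp_kernel[OF m b] by (subst nn_integral_cmult) auto
  also have "\<dots> = ennreal ((m / (m - s * \<Omega>)) powr m)"
  proof -
    have "s * \<Omega> < m" using s \<Omega> by (simp add: field_simps)
    then have "m / (m - s * \<Omega>) = 1 / ((\<Omega> / m) * b)"
      using m \<Omega> by (simp add: b_def field_simps)
    then have "(m / (m - s * \<Omega>)) powr m = 1 / ((\<Omega> / m) powr m * b powr m)"
      using m \<Omega> b by (simp add: powr_divide powr_mult)
    then show ?thesis
      using Z Gamma_real_pos[OF m] by (simp add: ennreal_mult'[symmetric] Z_def)
  qed
  finally show ?thesis .
qed

lemma prob_space_nakagami_power: "prob_space (nakagami_power m \<Omega>)"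
proof
  have "emeasure (nakagami_power m \<Omega>) (space (nakagami_power m \<Omega>))
      = (\<integral>\<^sup>+x. ennreal (exp (0 * x)) \<partial>nakagami_power m \<Omega>)"
    by (simp add: nn_integral_const del: space_nakagami_power)
  also have "\<dots> = 1"
    using m \<Omega> by (subst nn_integral_exp_nakagami_power) auto
  finally show "emeasure (nakagami_power m \<Omega>) (space (nakagami_power m \<Omega>)) = 1" .
qed

lemma real_distribution_nakagami_power: "real_distribution (nakagami_power m \<Omega>)"
  using prob_space_nakagami_power by (simp add: real_distribution_def real_distribution_axioms_def)

lemma measure_nakagami_power_singleton: "measure (nakagami_power m \<Omega>) {x} = 0"
proof -
  have "A \<in> null_sets (nakagami_power m \<Omega>)" if A: "A \<in> null_sets lborel" for A
    unfolding nakagami_power_def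
    by (subst null_sets_density_iff) (use AE_not_in[OF A] A in \<open>auto elim!: AE_mp\<close>)
  moreover have "{x} \<in> null_sets lborel" by (intro countable_imp_null_set_lborel) auto
  ultimately have "{x} \<in> null_sets (nakagami_power m \<Omega>)" by blast
  then show ?thesis by (simp add: measure_def null_setsD1)
qed

lemma emeasure_nakagami_power_nonpos: "emeasure (nakagami_power m \<Omega>) {..0} = 0"
proof -
  have "emeasure (nakagami_power m \<Omega>) {..0} = (\<integral>\<^sup>+y. ennreal (gamma_pdf m \<Omega> y) * indicator {..0} y \<partial>lborel)"
    unfolding nakagami_power_def by (subst emeasure_density) auto
  also have "\<dots> = (\<integral>\<^sup>+(y::real). 0 \<partial>lborel)"
    by (rule nn_integral_cong_AE)
      (use AE_lborel_singleton[of 0] in \<open>auto elim!: AE_mp simp: gamma_pdf_def indicator_def\<close>)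
  finally show ?thesis by simp
qed

lemma gamma_pdf_exp_lower_bound:
  assumes y: "1 \<le> y"
  shows "exp (- (\<bar>m - 1\<bar> + m / \<Omega>) * y) / (Gamma m * (\<Omega> / m) powr m) \<le> gamma_pdf m \<Omega> y"
proof -
  have "0 \<le> ln y" "ln y \<le> y" using y ln_le_minus_one[of y] by auto
  then have "\<bar>(m - 1) * ln y\<bar> \<le> \<bar>m - 1\<bar> * y"
    by (simp add: abs_mult mult_left_mono)
  then have "- (\<bar>m - 1\<bar> + m / \<Omega>) * y \<le> (m - 1) * ln y + - m * y / \<Omega>"
    by (simp add: algebra_simps)
  then have "exp (- (\<bar>m - 1\<bar> + m / \<Omega>) * y) \<le> y powr (m - 1) * exp (- m * y / \<Omega>)"
    using y by (simp add: powr_def exp_add[symmetric])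
  then show ?thesis
    using y m \<Omega> Gamma_real_pos[OF m] by (simp add: gamma_pdf_def divide_right_mono)
qed

lemma nakagami_power_tail_exp_lower_bound:
  "\<exists>a>0. \<exists>c>0. \<forall>x\<ge>0. c * exp (- a * x) \<le> measure (nakagami_power m \<Omega>) {x<..}"
proof -
  define a where "a = \<bar>m - 1\<bar> + m / \<Omega>"
  define Z where "Z = Gamma m * (\<Omega> / m) powr m"
  have a: "0 < a" using m \<Omega> by (simp add: a_def add_nonneg_pos)
  have Z: "0 < Z" using m \<Omega> Gamma_real_pos[OF m] by (simp add: Z_def)
  interpret prob_space "nakagami_power m \<Omega>" by (rule prob_space_nakagami_power)
  have "exp (- 2 * a) / Z * exp (- a * x) \<le> measure (nakagami_power m \<Omega>) {x<..}" if x: "0 \<le> x" for x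
  proof -
    define L where "L = exp (- a * (x + 2)) / Z"
    have pdf: "L \<le> gamma_pdf m \<Omega> y" if y: "y \<in> {x + 1..x + 2}" for y
    proof -
      have "L \<le> exp (- a * y) / Z"
        using y a Z by (simp add: L_def divide_right_mono)
      also have "\<dots> \<le> gamma_pdf m \<Omega> y"
        using gamma_pdf_exp_lower_bound[of y] y x by (simp add: a_def Z_def)
      finally show ?thesis .
    qed
    have "ennreal L = (\<integral>\<^sup>+y. ennreal L * indicator {x + 1..x + 2} y \<partial>lborel)"
      by (subst nn_integral_cmult_indicator) auto
    also have "\<dots> \<le> (\<integral>\<^sup>+y. ennreal (gamma_pdf m \<Omega> y) * indicator {x<..} y \<partial>lborel)"
      by (rule nn_integral_mono) (use pdf in \<open>auto simp: indicator_def intro!: ennreal_leI\<close>)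
    also have "\<dots> = emeasure (nakagami_power m \<Omega>) {x<..}"
      unfolding nakagami_power_def by (subst emeasure_density) auto
    also have "\<dots> = ennreal (measure (nakagami_power m \<Omega>) {x<..})"
      by (rule emeasure_eq_measure)
    finally have "L \<le> measure (nakagami_power m \<Omega>) {x<..}"
      by (subst (asm) ennreal_le_iff) auto
    moreover have "L = exp (- 2 * a) / Z * exp (- a * x)"
      by (simp add: L_def exp_add[symmetric] algebra_simps)
    ultimately show ?thesis by simp
  qed
  moreover have "0 < exp (- 2 * a) / Z" using Z by simp
  ultimately show ?thesis using a by blast
qed

end

lemma real_distribution_tail_attains:
  assumes M: "real_distribution M" and no_atoms: "\<And>x. measure M {x} = 0"
    and nonpos: "measure M {..0} = 0" and p: "0 < p" "p < 1"
  shows "\<exists>T\<ge>0. measure M {T<..} = p"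
proof -
  interpret real_distribution M by (rule M)
  have tail: "measure M {T<..} = 1 - cdf M T" for T
  proof -
    have "{T<..} = space M - {..T}" by auto
    then show ?thesis using prob_compl[of "{..T}"] by (simp add: cdf_def)
  qed
  have "\<forall>\<^sub>F x in at_top. 1 - p < cdf M x"
    using cdf_lim_at_top_prob p by (intro order_tendstoD) auto
  then obtain x1 where x1: "\<And>x. x1 \<le> x \<Longrightarrow> 1 - p < cdf M x"
    by (auto simp: eventually_at_top_linorder)
  define b where "b = max x1 0"
  have "continuous_on {0..b} (cdf M)"
    by (intro continuous_at_imp_continuous_on ballI) (simp add: isCont_cdf no_atoms)
  moreover have "cdf M 0 = 0" "1 - p < cdf M b"
    using nonpos x1[of b] by (auto simp: cdf_def b_def)
  ultimately obtain T where "0 \<le> T" "cdf M T = 1 - p"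
    using p IVT'[of "cdf M" 0 "1 - p" b] by (force simp: b_def)
  then show ?thesis using tail by auto
qed

section \<open>Strong links\<close>

definition strong_links :: "nat \<Rightarrow> real \<Rightarrow> (nat \<times> nat \<Rightarrow> real) \<Rightarrow> nat set" where
  "strong_links n T g = {i \<in> {..<n}. T < g (i, i)}"

definition strong_interference :: "nat \<Rightarrow> real \<Rightarrow> (nat \<times> nat \<Rightarrow> real) \<Rightarrow> nat \<Rightarrow> real" where
  "strong_interference n T g i = (\<Sum>j\<in>{..<n} - {i}. if T < g (j, j) then g (j, i) else 0)"

lemma top_direct_set_subset_strong_links:
  assumes top: "top_direct_set n g k S" and card: "k \<le> card (strong_links n T g)"
  shows "S \<subseteq> strong_links n T g"
proof
  fix i assume i: "i \<in> S"
  have S: "S \<subseteq> {..<n}" "card S = k" "\<forall>i\<in>S. \<forall>j\<in>{..<n} - S. g (j, j) \<le> g (i, i)"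
    using top by (auto simp: top_direct_set_def)
  then have "finite S" using finite_subset by blast
  show "i \<in> strong_links n T g"
  proof (rule ccontr)
    assume "i \<notin> strong_links n T g"
    then have "g (i, i) \<le> T" using i S by (auto simp: strong_links_def)
    have "strong_links n T g \<subseteq> S - {i}"
    proof
      fix j assume "j \<in> strong_links n T g"
      then have "j < n" "g (i, i) < g (j, j)" using \<open>g (i, i) \<le> T\<close> by (auto simp: strong_links_def)
      then show "j \<in> S - {i}" using i S(3) by force
    qed
    then have "card (strong_links n T g) \<le> card (S - {i})"
      using \<open>finite S\<close> by (intro card_mono) auto
    also have "\<dots> < k"
      using i S \<open>finite S\<close> card_gt_0_iff[of S] by auto
    finally show False using card by simp
  qed
qed

lemma SINR_gt_of_strong_links:
  fixes g :: "nat \<times> nat \<Rightarrow> real"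
  assumes pos: "\<forall>a<n. \<forall>b<n. 0 < g (a, b)" and noise: "0 < N0 \<or> S - {i} \<noteq> {}"
    and N0: "0 \<le> N0" and \<beta>: "0 < \<beta>"
    and strong: "S \<subseteq> strong_links n T g" and i: "i \<in> S"
    and interference: "strong_interference n T g i \<le> T / \<beta> - N0"
  shows "\<beta> < SINR g N0 S i"
proof -
  have S: "S \<subseteq> {..<n}" "finite S"
    using strong finite_subset[of S "{..<n}"] by (auto simp: strong_links_def)
  have "i < n" "T < g (i, i)" using i strong by (auto simp: strong_links_def)
  have "(\<Sum>j\<in>S - {i}. g (j, i)) = (\<Sum>j\<in>S - {i}. if T < g (j, j) then g (j, i) else 0)"
    using strong by (intro sum.cong) (auto simp: strong_links_def)
  also have "\<dots> \<le> strong_interference n T g i"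
    unfolding strong_interference_def using S pos \<open>i < n\<close>
    by (intro sum_mono2) (auto simp: less_imp_le)
  finally have "\<beta> * (N0 + (\<Sum>j\<in>S - {i}. g (j, i))) \<le> \<beta> * (N0 + strong_interference n T g i)"
    using \<beta> by (intro mult_left_mono) auto
  also have "\<dots> \<le> T" using interference \<beta> by (simp add: field_simps)
  also have "\<dots> < g (i, i)" by fact
  moreover have "0 < N0 + (\<Sum>j\<in>S - {i}. g (j, i))"
  proof (cases "0 < N0")
    case True
    moreover have "0 \<le> (\<Sum>j\<in>S - {i}. g (j, i))"
      using pos S \<open>i < n\<close> by (intro sum_nonneg) (auto intro: less_imp_le)
    ultimately show ?thesis by linarith
  next
    case False
    then have "0 < (\<Sum>j\<in>S - {i}. g (j, i))"
      using noise pos S \<open>i < n\<close> by (intro sum_pos) auto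
    then show ?thesis using N0 by linarith
  qed
  ultimately show ?thesis using i by (simp add: SINR_def field_simps)
qed

lemma throughput_ge_of_strong_links:
  fixes g :: "nat \<times> nat \<Rightarrow> real"
  assumes pos: "\<forall>a<n. \<forall>b<n. 0 < g (a, b)" and k: "0 < N0 \<or> 2 \<le> k"
    and N0: "0 \<le> N0" and \<beta>: "0 < \<beta>"
    and card: "k \<le> card (strong_links n T g)"
    and interference: "\<forall>i\<in>strong_links n T g. strong_interference n T g i \<le> T / \<beta> - N0"
    and top: "top_direct_set n g k S"
  shows "k \<le> throughput n g N0 \<beta> S"
proof -
  have S: "S \<subseteq> {..<n}" "card S = k" using top by (auto simp: top_direct_set_def)
  then have "finite S" using finite_subset by blast
  have strong: "S \<subseteq> strong_links n T g"
    using top card by (rule top_direct_set_subset_strong_links)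
  have "\<beta> < SINR g N0 S i" if i: "i \<in> S" for i
  proof (rule SINR_gt_of_strong_links[OF pos _ N0 \<beta> strong i])
    have "card (S - {i}) = card S - 1" using \<open>finite S\<close> i by (simp add: card_Diff_singleton)
    then have "\<not> 0 < N0 \<Longrightarrow> 0 < card (S - {i})" using k S by auto
    then show "0 < N0 \<or> S - {i} \<noteq> {}" by (metis card.empty less_irrefl)
    show "strong_interference n T g i \<le> T / \<beta> - N0"
      using interference i strong by auto
  qed
  then have "S \<subseteq> {i \<in> {..<n}. \<beta> < SINR g N0 S i}" using S by auto
  then have "card S \<le> throughput n g N0 \<beta> S"
    unfolding throughput_def by (intro card_mono) auto
  then show ?thesis using S by simp
qed

definition nonpos_count :: "nat \<Rightarrow> (nat \<times> nat \<Rightarrow> real) \<Rightarrow> ennreal" where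
  "nonpos_count n g = (\<Sum>c\<in>{..<n} \<times> {..<n}. indicator {..0} (g c))"

definition chernoff_weight :: "nat \<Rightarrow> real \<Rightarrow> nat \<Rightarrow> (nat \<times> nat \<Rightarrow> real) \<Rightarrow> ennreal" where
  "chernoff_weight n T k g = ennreal (exp (real k)) * (\<Prod>j<n. ennreal (if T < g (j, j) then exp (-1) else 1))"

definition markov_weight :: "nat \<Rightarrow> real \<Rightarrow> real \<Rightarrow> real \<Rightarrow> (nat \<times> nat \<Rightarrow> real) \<Rightarrow> ennreal" where
  "markov_weight n T s R g = (\<Sum>i<n. ennreal (exp (- s * R)) * (ennreal (if T < g (i, i) then 1 else 0) *
     (\<Prod>j\<in>{..<n} - {i}. ennreal (if T < g (j, j) then exp (s * g (j, i)) else 1))))"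

lemma chernoff_weight_eq: "chernoff_weight n T k g = ennreal (exp (real k - real (card (strong_links n T g))))"
proof -
  have "(\<Prod>j<n. if T < g (j, j) then exp (-1) else 1::real) = exp (-1) ^ card (strong_links n T g)"
    by (simp add: prod.If_cases strong_links_def Int_def conj_commute)
  then show ?thesis
    by (simp add: chernoff_weight_def prod_ennreal ennreal_mult'[symmetric] exp_of_nat_mult[symmetric] mult_exp_exp)
qed

lemma prod_exp_strong_interference:
  "(\<Prod>j\<in>{..<n} - {i}. ennreal (if T < g (j, j) then exp (s * g (j, i)) else 1))
    = ennreal (exp (s * strong_interference n T g i))"
proof -
  have "(\<Prod>j\<in>{..<n} - {i}. ennreal (if T < g (j, j) then exp (s * g (j, i)) else 1))
      = ennreal (\<Prod>j\<in>{..<n} - {i}. if T < g (j, j) then exp (s * g (j, i)) else 1)"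
    by (rule prod_ennreal) simp
  then show ?thesis
    by (simp add: strong_interference_def exp_sum sum_distrib_left if_distrib cong: if_cong)
qed

lemma failure_weights_ge_one:
  assumes s: "0 \<le> s" and fail: "\<not> ((\<forall>a<n. \<forall>b<n. 0 < g (a, b)) \<and> k \<le> card (strong_links n T g)
    \<and> (\<forall>i\<in>strong_links n T g. strong_interference n T g i \<le> R))"
  shows "1 \<le> nonpos_count n g + chernoff_weight n T k g + markov_weight n T s R g"
proof -
  consider a b where "a < n" "b < n" "g (a, b) \<le> 0"
    | "card (strong_links n T g) < k"
    | i where "i \<in> strong_links n T g" "R < strong_interference n T g i"
    using fail by (meson not_less)
  then show ?thesis
  proof cases
    case 1
    then have "indicator {..0} (g (a, b)) \<le> nonpos_count n g"
      unfolding nonpos_count_def by (intro member_le_sum) auto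
    then show ?thesis using 1 by (simp add: add.assoc add_increasing2)
  next
    case 2
    then have "1 \<le> chernoff_weight n T k g" by (simp add: chernoff_weight_eq)
    then show ?thesis by (simp add: add_increasing add_increasing2)
  next
    case 3
    then have i: "i < n" "T < g (i, i)" by (auto simp: strong_links_def)
    have "s * R \<le> s * strong_interference n T g i" using 3 s by (intro mult_left_mono) auto
    then have "ennreal 1 \<le> ennreal (exp (- s * R)) * ennreal (exp (s * strong_interference n T g i))"
      by (simp add: ennreal_mult'[symmetric] mult_exp_exp del: ennreal_1)
    also have "\<dots> \<le> markov_weight n T s R g"
      unfolding markov_weight_def using i
      by (intro member_le_sum[of i, THEN order_trans[rotated]]) (auto simp: prod_exp_strong_interference)
    finally show ?thesis by (simp add: add_increasing)
  qed
qed

lemma one_add_mult_diff_one_nonneg: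
  fixes p x :: real
  assumes "0 \<le> p" "p \<le> 1" "0 \<le> x"
  shows "0 \<le> 1 + p * (x - 1)"
proof -
  have "1 + p * (x - 1) = (1 - p) + p * x" by (simp add: algebra_simps)
  moreover have "0 \<le> p * x" using assms by simp
  ultimately show ?thesis using assms by linarith
qed

lemma power_one_add_le_exp:
  fixes x :: real
  assumes "0 \<le> 1 + x"
  shows "(1 + x) ^ n \<le> exp (real n * x)"
proof -
  have "(1 + x) ^ n \<le> exp x ^ n"
    using assms exp_ge_add_one_self[of x] by (intro power_mono) auto
  then show ?thesis by (simp add: exp_of_nat_mult)
qed

lemma exp_minus_one_le_half: "exp (-1::real) \<le> 1 / 2"
proof -
  have "2 \<le> exp (1::real)" using exp_ge_add_one_self[of 1] by simp
  then show ?thesis by (simp add: exp_minus field_simps)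
qed

lemma chernoff_factor_le:
  fixes p :: real
  assumes p: "0 \<le> p" "p \<le> 1"
  shows "exp (real k) * (1 + p * (exp (-1) - 1)) ^ n \<le> exp (real k - real n * p / 2)"
proof -
  have "(1 + p * (exp (-1) - 1)) ^ n \<le> exp (real n * (p * (exp (-1) - 1)))"
    using p by (intro power_one_add_le_exp one_add_mult_diff_one_nonneg) auto
  also have "\<dots> \<le> exp (- real n * p / 2)"
  proof -
    have "real n * p * (exp (-1) - 1) \<le> real n * p * (- 1 / 2)"
      using p exp_minus_one_le_half by (intro mult_left_mono) auto
    then show ?thesis by (simp add: algebra_simps)
  qed
  finally have "exp (real k) * (1 + p * (exp (-1) - 1)) ^ n \<le> exp (real k) * exp (- real n * p / 2)"
    by (intro mult_left_mono) auto
  also have "\<dots> = exp (real k - real n * p / 2)"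
    by (simp flip: exp_add)
  finally show ?thesis .
qed

lemma markov_factor_le:
  fixes p M :: real
  assumes p: "0 \<le> p" "p \<le> 1" and M: "0 \<le> M"
  shows "(1 + p * (M - 1)) ^ (n - 1) \<le> exp (real n * p * M)"
proof -
  have "(1 + p * (M - 1)) ^ (n - 1) \<le> exp (real (n - 1) * (p * (M - 1)))"
    using p M by (intro power_one_add_le_exp one_add_mult_diff_one_nonneg) auto
  also have "real (n - 1) * (p * (M - 1)) \<le> real (n - 1) * (p * M)"
    using p by (intro mult_left_mono) (auto simp: algebra_simps)
  also have "\<dots> \<le> real n * (p * M)"
    using p M by (intro mult_right_mono) auto
  finally show ?thesis by (simp add: mult.assoc)
qed

lemma exp_neg_le_powr_of_tail:
  fixes a t s \<beta> T p :: real
  assumes "0 < a" "0 < t" "0 < \<beta>" "0 \<le> s" and tail: "t * exp (- a * T) \<le> p"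
  shows "exp (- s * T / \<beta>) \<le> (p / t) powr (s / (a * \<beta>))"
proof -
  have "exp (- s * T / \<beta>) = exp (- a * T) powr (s / (a * \<beta>))"
    using assms by (simp add: powr_def field_simps)
  also have "\<dots> \<le> (p / t) powr (s / (a * \<beta>))"
    using assms by (intro powr_mono2) (auto simp: pos_le_divide_eq mult.commute)
  finally show ?thesis .
qed

lemma failure_bound_tendsto_zero:
  fixes c e l t \<kappa> :: real
  assumes "0 < c" "0 < e" "0 < l" "0 < t"
  shows "(\<lambda>n::nat. exp (1 - c * ln (real n))
      + \<kappa> * (ln (real n) * exp (e / 2 * ln (real n)) * (l * ln (real n) / (t * real n)) powr e))
    \<longlonglongrightarrow> 0"
proof -
  have "(\<lambda>n::nat. exp (1 - c * ln (real n))) \<longlonglongrightarrow> 0"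
    "(\<lambda>n::nat. ln (real n) * exp (e / 2 * ln (real n)) * (l * ln (real n) / (t * real n)) powr e) \<longlonglongrightarrow> 0"
    using assms by real_asymp+
  from tendsto_add[OF this(1) tendsto_mult_right_zero[OF this(2)]] show ?thesis by simp
qed

section \<open>Independent channel powers\<close>

context
  fixes N :: "real measure"
  assumes N: "prob_space N" and sets_N: "sets N = sets borel"
begin

interpretation N: prob_space N by (rule N)

interpretation PiN: product_sigma_finite "\<lambda>_. N"
  unfolding product_sigma_finite_def using prob_space_imp_sigma_finite[OF N] by simp

lemma measurable_iid_component [measurable]: "(\<lambda>g. g c) \<in> borel_measurable (PiM I (\<lambda>_. N))"
proof (cases "c \<in> I")
  case True
  then have "(\<lambda>g. g c) \<in> measurable (PiM I (\<lambda>_. N)) N" by (rule measurable_component_singleton)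
  then show ?thesis using measurable_cong_sets[OF refl sets_N] by blast
next
  case False
  then have "g c = undefined" if "g \<in> space (PiM I (\<lambda>_. N))" for g
    using that by (auto simp: space_PiM PiE_def extensional_def)
  then show ?thesis by (subst measurable_cong[where g = "\<lambda>_. undefined"]) auto
qed

lemma nn_integral_iid_prod:
  assumes K: "finite K" "D \<subseteq> K" and H: "\<And>c. c \<in> D \<Longrightarrow> H c \<in> borel_measurable borel"
  shows "(\<integral>\<^sup>+x. (\<Prod>c\<in>D. H c (x c)) \<partial>PiM K (\<lambda>_. N)) = (\<Prod>c\<in>D. \<integral>\<^sup>+v. H c v \<partial>N)"
proof -
  define H' where "H' c = (if c \<in> D then H c else (\<lambda>_. 1))" for c
  have "(\<integral>\<^sup>+x. (\<Prod>c\<in>D. H c (x c)) \<partial>PiM K (\<lambda>_. N)) = (\<integral>\<^sup>+x. (\<Prod>c\<in>K. H' c (x c)) \<partial>PiM K (\<lambda>_. N))"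
    by (intro nn_integral_cong prod.mono_neutral_cong_right[OF K, symmetric]) (auto simp: H'_def)
  also have "\<dots> = (\<Prod>c\<in>K. \<integral>\<^sup>+v. H' c v \<partial>N)"
    using H measurable_cong_sets[OF sets_N refl]
    by (intro PiN.product_nn_integral_prod[OF K(1)]) (auto simp: H'_def)
  also have "\<dots> = (\<Prod>c\<in>D. \<integral>\<^sup>+v. H c v \<partial>N)"
    by (rule prod.mono_neutral_cong_right[OF K]) (auto simp: H'_def N.emeasure_space_1)
  finally show ?thesis .
qed

lemma nn_integral_iid_threshold:
  assumes "0 \<le> a"
  shows "(\<integral>\<^sup>+x. ennreal (if T < x then a else 1) \<partial>N) = ennreal (1 + measure N {T<..} * (a - 1))"
proof -
  have "(\<integral>\<^sup>+x. ennreal (if T < x then a else 1) \<partial>N) = (\<integral>\<^sup>+x. ennreal a * indicator {T<..} x + indicator {..T} x \<partial>N)"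
    by (intro nn_integral_cong) (auto simp: indicator_def)
  also have "\<dots> = ennreal a * emeasure N {T<..} + emeasure N {..T}"
    using sets_N by (subst nn_integral_add) (auto simp: nn_integral_cmult_indicator measurable_cong_sets[OF sets_N refl])
  also have "\<dots> = ennreal (a * measure N {T<..} + measure N {..T})"
    using assms by (simp add: N.emeasure_eq_measure ennreal_mult' ennreal_plus)
  also have "measure N {..T} = 1 - measure N {T<..}"
    using N.prob_compl[of "{T<..}"] sets_N sets_eq_imp_space_eq[OF sets_N]
    by (simp add: Compl_eq_Diff_UNIV[symmetric])
  finally show ?thesis by (simp add: algebra_simps)
qed

lemma nn_integral_iid_nonpos:
  assumes nonpos: "emeasure N {..0} = 0" and K: "finite K" "c \<in> K"
  shows "(\<integral>\<^sup>+g. indicator {..0} (g c) \<partial>PiM K (\<lambda>_. N)) = 0"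
proof -
  have "(\<integral>\<^sup>+g. indicator {..0} (g c) \<partial>PiM K (\<lambda>_. N)) = (\<integral>\<^sup>+v. indicator {..0} v \<partial>N)"
    using nn_integral_iid_prod[of K "{c}" "\<lambda>_. indicator {..0}"] K by simp
  also have "\<dots> = emeasure N {..0}"
    using sets_N by simp
  finally show ?thesis using nonpos by simp
qed

lemma nn_integral_iid_diagonal:
  assumes K: "finite K" "\<And>j. j < n \<Longrightarrow> (j, j) \<in> K"
    and h: "\<And>j. j < n \<Longrightarrow> h j \<in> borel_measurable borel"
  shows "(\<integral>\<^sup>+g. (\<Prod>j<n. h j (g (j, j))) \<partial>PiM K (\<lambda>_. N)) = (\<Prod>j<n. \<integral>\<^sup>+v. h j v \<partial>N)"
proof -
  have "(\<integral>\<^sup>+g. (\<Prod>j<n. h j (g (j, j))) \<partial>PiM K (\<lambda>_. N))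
      = (\<integral>\<^sup>+g. (\<Prod>c\<in>(\<lambda>j. (j, j)) ` {..<n}. h (fst c) (g c)) \<partial>PiM K (\<lambda>_. N))"
    by (intro nn_integral_cong) (simp add: prod.reindex inj_on_def)
  also have "\<dots> = (\<Prod>c\<in>(\<lambda>j. (j, j)) ` {..<n}. \<integral>\<^sup>+v. h (fst c) v \<partial>N)"
    using K h by (intro nn_integral_iid_prod) auto
  finally show ?thesis by (simp add: prod.reindex inj_on_def)
qed

text \<open>Column \<open>i\<close> is integrated out first; what remains only involves the diagonal.\<close>
lemma nn_integral_iid_column:
  assumes i: "i < n" and mgf: "(\<integral>\<^sup>+v. ennreal (exp (s * v)) \<partial>N) = ennreal M" and M: "0 \<le> M"
  shows "(\<integral>\<^sup>+g. ennreal (if T < g (i, i) then 1 else 0) *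
            (\<Prod>j\<in>{..<n} - {i}. ennreal (if T < g (j, j) then exp (s * g (j, i)) else 1))
          \<partial>PiM ({..<n} \<times> {..<n}) (\<lambda>_. N))
       = ennreal (measure N {T<..}) * ennreal (1 + measure N {T<..} * (M - 1)) ^ (n - 1)"
proof -
  define J where "J = {..<n} - {i}"
  define C where "C = (\<lambda>j. (j, i)) ` J"
  define R where "R = {..<n} \<times> {..<n} - C"
  define A where "A u = ennreal (if T < u then 1 else 0)" for u :: real
  define \<phi> where "\<phi> u v = ennreal (if T < u then exp (s * v) else 1)" for u v :: real
  define \<psi> where "\<psi> u = ennreal (if T < u then M else 1)" for u :: real
  define F where "F g = A (g (i, i)) * (\<Prod>j\<in>J. \<phi> (g (j, j)) (g (j, i)))" for g :: "nat \<times> nat \<Rightarrow> real"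
  have inj: "inj_on (\<lambda>j::nat. (j, i)) X" for X by (auto simp: inj_on_def)
  have RC: "{..<n} \<times> {..<n} = R \<union> C" "R \<inter> C = {}" "finite R" "finite C"
    using i by (auto simp: R_def C_def J_def)
  have diag: "(j, j) \<in> R" if "j < n" for j
    using that by (auto simp: R_def C_def J_def)
  have [measurable]: "A \<in> borel_measurable borel" "\<psi> \<in> borel_measurable borel"
    "(\<lambda>v. \<phi> u v) \<in> borel_measurable borel" for u
    unfolding A_def \<psi>_def \<phi>_def by measurable
  have "F \<in> borel_measurable (PiM (R \<union> C) (\<lambda>_. N))"
    unfolding F_def A_def \<phi>_def by measurable
  have column: "(\<integral>\<^sup>+y. (\<Prod>j\<in>J. \<phi> (x (j, j)) (y (j, i))) \<partial>PiM C (\<lambda>_. N)) = (\<Prod>j\<in>J. \<psi> (x (j, j)))" for x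
  proof -
    have "(\<integral>\<^sup>+y. (\<Prod>j\<in>J. \<phi> (x (j, j)) (y (j, i))) \<partial>PiM C (\<lambda>_. N))
        = (\<integral>\<^sup>+y. (\<Prod>c\<in>C. \<phi> (x (fst c, fst c)) (y c)) \<partial>PiM C (\<lambda>_. N))"
      by (simp add: C_def prod.reindex[OF inj])
    also have "\<dots> = (\<Prod>c\<in>C. \<integral>\<^sup>+v. \<phi> (x (fst c, fst c)) v \<partial>N)"
      using RC by (intro nn_integral_iid_prod) auto
    also have "\<dots> = (\<Prod>j\<in>J. \<psi> (x (j, j)))"
      using mgf N.emeasure_space_1
      by (auto simp: C_def prod.reindex[OF inj] \<phi>_def \<psi>_def intro!: prod.cong)
    finally show ?thesis .
  qed
  have split_i: "(\<Prod>j<n. f j) = f i * (\<Prod>j\<in>J. f j)" for f :: "nat \<Rightarrow> ennreal"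
    using i by (simp add: J_def prod.remove[of "{..<n}" i])
  have "(\<integral>\<^sup>+g. F g \<partial>PiM (R \<union> C) (\<lambda>_. N))
      = (\<integral>\<^sup>+x. (\<integral>\<^sup>+y. F (merge R C (x, y)) \<partial>PiM C (\<lambda>_. N)) \<partial>PiM R (\<lambda>_. N))"
    using RC \<open>F \<in> _\<close> by (intro PiN.product_nn_integral_fold) auto
  also have "\<dots> = (\<integral>\<^sup>+x. A (x (i, i)) * (\<Prod>j\<in>J. \<psi> (x (j, j))) \<partial>PiM R (\<lambda>_. N))"
  proof (intro nn_integral_cong)
    fix x
    have "F (merge R C (x, y)) = A (x (i, i)) * (\<Prod>j\<in>J. \<phi> (x (j, j)) (y (j, i)))" for y
      using diag i unfolding F_def
      by (auto simp: merge_def R_def C_def J_def intro!: prod.cong arg_cong2[where f = "(*)"])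
    then show "(\<integral>\<^sup>+y. F (merge R C (x, y)) \<partial>PiM C (\<lambda>_. N)) = A (x (i, i)) * (\<Prod>j\<in>J. \<psi> (x (j, j)))"
      by (simp add: nn_integral_cmult column)
  qed
  also have "\<dots> = (\<integral>\<^sup>+x. (\<Prod>j<n. (if j = i then A else \<psi>) (x (j, j))) \<partial>PiM R (\<lambda>_. N))"
    by (simp add: split_i J_def)
  also have "\<dots> = (\<Prod>j<n. \<integral>\<^sup>+v. (if j = i then A else \<psi>) v \<partial>N)"
    using RC diag by (intro nn_integral_iid_diagonal) auto
  also have "\<dots> = (\<integral>\<^sup>+v. A v \<partial>N) * (\<Prod>j\<in>J. \<integral>\<^sup>+v. \<psi> v \<partial>N)"
    by (simp add: split_i J_def)
  also have "(\<integral>\<^sup>+v. A v \<partial>N) = (\<integral>\<^sup>+v. indicator {T<..} v \<partial>N)"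
    by (intro nn_integral_cong) (simp add: A_def indicator_def)
  also have "\<dots> = emeasure N {T<..}"
    using sets_N by simp
  also have "(\<Prod>j\<in>J. \<integral>\<^sup>+v. \<psi> v \<partial>N) = ennreal (1 + measure N {T<..} * (M - 1)) ^ (n - 1)"
    using i M by (simp add: \<psi>_def nn_integral_iid_threshold J_def)
  finally show ?thesis
    using RC by (simp add: F_def A_def \<phi>_def J_def N.emeasure_eq_measure)
qed

lemma measurable_iid_nonpos_count [measurable]: "nonpos_count n \<in> borel_measurable (PiM I (\<lambda>_. N))"
  unfolding nonpos_count_def[abs_def] by measurable

lemma measurable_iid_chernoff_weight [measurable]: "chernoff_weight n T k \<in> borel_measurable (PiM I (\<lambda>_. N))"
  unfolding chernoff_weight_def[abs_def] by measurable

lemma measurable_iid_markov_weight [measurable]: "markov_weight n T s R \<in> borel_measurable (PiM I (\<lambda>_. N))"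
  unfolding markov_weight_def[abs_def] by measurable

lemma nn_integral_iid_nonpos_count:
  assumes "emeasure N {..0} = 0"
  shows "(\<integral>\<^sup>+g. nonpos_count n g \<partial>PiM ({..<n} \<times> {..<n}) (\<lambda>_. N)) = 0"
  unfolding nonpos_count_def by (subst nn_integral_sum) (auto simp: nn_integral_iid_nonpos[OF assms])

lemma nn_integral_iid_chernoff_weight:
  "(\<integral>\<^sup>+g. chernoff_weight n T k g \<partial>PiM ({..<n} \<times> {..<n}) (\<lambda>_. N))
    = ennreal (exp (real k) * (1 + measure N {T<..} * (exp (-1) - 1)) ^ n)"
proof -
  have "(\<integral>\<^sup>+g. (\<Prod>j<n. ennreal (if T < g (j, j) then exp (-1) else 1)) \<partial>PiM ({..<n} \<times> {..<n}) (\<lambda>_. N))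
      = (\<Prod>j<n. \<integral>\<^sup>+v. ennreal (if T < v then exp (-1) else 1) \<partial>N)"
    by (intro nn_integral_iid_diagonal) auto
  moreover have "0 \<le> 1 + measure N {T<..} * (exp (-1) - 1)"
    by (intro one_add_mult_diff_one_nonneg) auto
  ultimately show ?thesis
    by (simp add: chernoff_weight_def nn_integral_cmult nn_integral_iid_threshold ennreal_power ennreal_mult')
qed

lemma nn_integral_iid_markov_weight:
  assumes mgf: "(\<integral>\<^sup>+v. ennreal (exp (s * v)) \<partial>N) = ennreal M" and M: "0 \<le> M"
  shows "(\<integral>\<^sup>+g. markov_weight n T s R g \<partial>PiM ({..<n} \<times> {..<n}) (\<lambda>_. N))
    = ennreal (real n * exp (- s * R) * measure N {T<..} * (1 + measure N {T<..} * (M - 1)) ^ (n - 1))"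
proof -
  have "0 \<le> 1 + measure N {T<..} * (M - 1)"
    using M by (intro one_add_mult_diff_one_nonneg) auto
  then show ?thesis
    by (simp add: markov_weight_def nn_integral_sum nn_integral_cmult nn_integral_iid_column[OF _ mgf M]
        ennreal_power ennreal_mult' ennreal_of_nat_eq_real_of_nat mult.assoc)
qed

lemma prob_iid_strong_links_ge:
  fixes n k :: nat and E :: "(nat \<times> nat \<Rightarrow> real) set"
  assumes nonpos: "emeasure N {..0} = 0" and s: "0 \<le> s"
    and mgf: "(\<integral>\<^sup>+v. ennreal (exp (s * v)) \<partial>N) = ennreal M" and M: "0 \<le> M"
    and E: "E \<in> sets (PiM ({..<n} \<times> {..<n}) (\<lambda>_. N))"
    and good: "\<And>g. g \<in> space (PiM ({..<n} \<times> {..<n}) (\<lambda>_. N)) \<Longrightarrow> \<forall>a<n. \<forall>b<n. 0 < g (a, b) \<Longrightarrow>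
      k \<le> card (strong_links n T g) \<Longrightarrow> \<forall>i\<in>strong_links n T g. strong_interference n T g i \<le> R \<Longrightarrow> g \<in> E"
  shows "1 - (exp (real k) * (1 + measure N {T<..} * (exp (-1) - 1)) ^ n
      + real n * exp (- s * R) * measure N {T<..} * (1 + measure N {T<..} * (M - 1)) ^ (n - 1))
    \<le> measure (PiM ({..<n} \<times> {..<n}) (\<lambda>_. N)) E" (is "1 - ?B \<le> _")
proof -
  have q_nonneg: "0 \<le> 1 + measure N {T<..} * (exp (-1) - 1)" "0 \<le> 1 + measure N {T<..} * (M - 1)"
    using M by (auto intro!: one_add_mult_diff_one_nonneg)
  define P where "P = PiM ({..<n} \<times> {..<n}) (\<lambda>_. N)"
  interpret P: prob_space P unfolding P_def by (intro prob_space_PiM N)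
  define F where "F g = nonpos_count n g + chernoff_weight n T k g + markov_weight n T s R g" for g
  have "emeasure P (space P - E) = (\<integral>\<^sup>+g. indicator (space P - E) g \<partial>P)"
    using E by (simp add: P_def)
  also have "\<dots> \<le> (\<integral>\<^sup>+g. F g \<partial>P)"
  proof (intro nn_integral_mono)
    fix g
    show "indicator (space P - E) g \<le> F g"
    proof (cases "g \<in> space P - E")
      case True
      with good have "\<not> ((\<forall>a<n. \<forall>b<n. 0 < g (a, b)) \<and> k \<le> card (strong_links n T g)
          \<and> (\<forall>i\<in>strong_links n T g. strong_interference n T g i \<le> R))"
        unfolding P_def by blast
      then show ?thesis using True failure_weights_ge_one[OF s] by (simp add: F_def)
    qed simp
  qed
  also have "\<dots> = 0 + (\<integral>\<^sup>+g. chernoff_weight n T k g \<partial>P) + (\<integral>\<^sup>+g. markov_weight n T s R g \<partial>P)"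
    unfolding F_def P_def by (simp add: nn_integral_add nn_integral_iid_nonpos_count[OF nonpos])
  also have "\<dots> = ennreal ?B"
    unfolding P_def nn_integral_iid_chernoff_weight nn_integral_iid_markov_weight[OF mgf M]
    using q_nonneg by (simp add: ennreal_plus)
  finally have "ennreal (measure P (space P - E)) \<le> ennreal ?B"
    by (simp only: P.emeasure_eq_measure)
  moreover have "0 \<le> ?B" using q_nonneg by simp
  ultimately have "measure P (space P - E) \<le> ?B" by (simp only: ennreal_le_iff)
  then show ?thesis using P.prob_compl[of E] E by (simp add: P_def)
qed

lemma sets_iid_throughput_event:
  "{g \<in> space (PiM I (\<lambda>_. N)). \<forall>S. top_direct_set n g k S \<longrightarrow> x \<le> real (throughput n g N0 \<beta> S)}
    \<in> sets (PiM I (\<lambda>_. N))"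
proof -
  have [measurable]: "(\<lambda>g. real (throughput n g N0 \<beta> S)) \<in> borel_measurable (PiM I (\<lambda>_. N))" for S
  proof -
    have "real (throughput n g N0 \<beta> S) = (\<Sum>i<n. if \<beta> < SINR g N0 S i then 1 else 0)" for g
      unfolding throughput_def by (simp add: sum.If_cases Int_def conj_commute)
    then show ?thesis unfolding SINR_def by simp
  qed
  \<comment> \<open>The measurability prover handles \<open><\<close> but not \<open>\<le>\<close> between two components.\<close>
  have "(\<forall>S. top_direct_set n g k S \<longrightarrow> x \<le> real (throughput n g N0 \<beta> S)) \<longleftrightarrow>
      (\<forall>S\<in>Pow {..<n}. card S = k \<longrightarrow> (\<forall>i j. i \<in> S \<longrightarrow> j \<in> {..<n} - S \<longrightarrow> \<not> g (i, i) < g (j, j))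
        \<longrightarrow> x \<le> real (throughput n g N0 \<beta> S))" for g
    by (auto simp: top_direct_set_def not_less)
  then show ?thesis by simp
qed

lemma prob_iid_throughput_ge:
  fixes n k :: nat and T :: real
  defines "p \<equiv> measure N {T<..}"
  assumes nonpos: "emeasure N {..0} = 0" and s: "0 \<le> s"
    and mgf: "(\<integral>\<^sup>+v. ennreal (exp (s * v)) \<partial>N) = ennreal M" and M: "0 \<le> M"
    and N0: "0 \<le> N0" and \<beta>: "0 < \<beta>" and k: "2 \<le> k" "x \<le> real k"
  shows "1 - (exp (real k - real n * p / 2) + real n * p * exp (s * N0 + real n * p * M - s * T / \<beta>))
    \<le> measure (PiM ({..<n} \<times> {..<n}) (\<lambda>_. N))
        {g \<in> space (PiM ({..<n} \<times> {..<n}) (\<lambda>_. N)).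
          \<forall>S. top_direct_set n g k S \<longrightarrow> x \<le> real (throughput n g N0 \<beta> S)}"
proof -
  have p: "0 \<le> p" "p \<le> 1" by (auto simp: p_def)
  have chernoff: "exp (real k) * (1 + p * (exp (-1) - 1)) ^ n \<le> exp (real k - real n * p / 2)"
    using p by (rule chernoff_factor_le)
  have interference: "real n * exp (- s * (T / \<beta> - N0)) * p * (1 + p * (M - 1)) ^ (n - 1)
      \<le> real n * p * exp (s * N0 + real n * p * M - s * T / \<beta>)"
  proof -
    have "(1 + p * (M - 1)) ^ (n - 1) \<le> exp (real n * p * M)"
      using p M by (rule markov_factor_le)
    then have "real n * p * exp (s * N0 - s * T / \<beta>) * (1 + p * (M - 1)) ^ (n - 1)
        \<le> real n * p * exp (s * N0 - s * T / \<beta>) * exp (real n * p * M)"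
      using p by (intro mult_left_mono) auto
    then show ?thesis by (simp add: mult_exp_exp algebra_simps)
  qed
  have "1 - (exp (real k) * (1 + p * (exp (-1) - 1)) ^ n
      + real n * exp (- s * (T / \<beta> - N0)) * p * (1 + p * (M - 1)) ^ (n - 1))
    \<le> measure (PiM ({..<n} \<times> {..<n}) (\<lambda>_. N))
        {g \<in> space (PiM ({..<n} \<times> {..<n}) (\<lambda>_. N)).
          \<forall>S. top_direct_set n g k S \<longrightarrow> x \<le> real (throughput n g N0 \<beta> S)}"
    unfolding p_def
  proof (rule prob_iid_strong_links_ge[OF nonpos s mgf M sets_iid_throughput_event], safe)
    fix g S
    assume "\<forall>a<n. \<forall>b<n. 0 < g (a, b)" "k \<le> card (strong_links n T g)"
      "\<forall>i\<in>strong_links n T g. strong_interference n T g i \<le> T / \<beta> - N0" "top_direct_set n g k S"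
    then have "k \<le> throughput n g N0 \<beta> S"
      using k N0 \<beta> by (intro throughput_ge_of_strong_links) auto
    then show "x \<le> real (throughput n g N0 \<beta> S)" using k by linarith
  qed
  then show ?thesis using chernoff interference by linarith
qed

lemma prob_iid_throughput_ge_log:
  fixes n :: nat and l t a s \<beta> T :: real
  defines "e \<equiv> s / (a * \<beta>)" and "c \<equiv> l / 4"
  assumes nonpos: "emeasure N {..0} = 0" and s: "0 \<le> s"
    and mgf: "(\<integral>\<^sup>+v. ennreal (exp (s * v)) \<partial>N) = ennreal M" and M: "0 \<le> M"
    and a: "0 < a" and t: "0 < t" and tail: "\<And>x. 0 \<le> x \<Longrightarrow> t * exp (- a * x) \<le> measure N {x<..}"
    and N0: "0 \<le> N0" and \<beta>: "0 < \<beta>"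
    and l: "0 < l" "l * M \<le> e / 2" and n: "2 \<le> c * ln (real n)"
    and T: "0 \<le> T" "measure N {T<..} = l * ln (real n) / real n"
  shows "1 - (exp (1 - c * ln (real n)) + l * exp (s * N0)
        * (ln (real n) * exp (e / 2 * ln (real n)) * (l * ln (real n) / (t * real n)) powr e))
    \<le> measure (PiM ({..<n} \<times> {..<n}) (\<lambda>_. N))
        {g \<in> space (PiM ({..<n} \<times> {..<n}) (\<lambda>_. N)).
          \<forall>S. top_direct_set n g (nat \<lceil>c * ln (real n)\<rceil>) S \<longrightarrow> c * ln (real n) \<le> real (throughput n g N0 \<beta> S)}"
proof -
  define p where "p = l * ln (real n) / real n"
  define k where "k = nat \<lceil>c * ln (real n)\<rceil>"
  have "0 < n" using n by (cases n) (auto simp: c_def)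
  then have np: "real n * p = l * ln (real n)" by (simp add: p_def)
  have k: "c * ln (real n) \<le> real k" "real k \<le> c * ln (real n) + 1" "2 \<le> k"
    using n unfolding k_def by linarith+
  have "0 \<le> p" using T(2) measure_nonneg[of N "{T<..}"] by (simp add: p_def)
  have tail_p: "exp (- s * T / \<beta>) \<le> (p / t) powr e"
    unfolding e_def using a t \<beta> s tail[OF T(1)] T(2) by (intro exp_neg_le_powr_of_tail) (auto simp: p_def)
  have "exp (real k - real n * p / 2) \<le> exp (1 - c * ln (real n))"
    using k np by (simp add: c_def)
  moreover have "real n * p * exp (s * N0 + real n * p * M - s * T / \<beta>)
      \<le> l * exp (s * N0) * (ln (real n) * exp (e / 2 * ln (real n)) * (l * ln (real n) / (t * real n)) powr e)"
  proof -
    have "0 < c * ln (real n)" using n by linarith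
    then have "0 < ln (real n)" using l by (simp add: c_def zero_less_mult_iff)
    then have "real n * p * M \<le> e / 2 * ln (real n)"
      using np l n mult_right_mono[OF l(2), of "ln (real n)"] by (auto simp: c_def algebra_simps)
    have "exp (s * N0 + real n * p * M - s * T / \<beta>) = exp (s * N0) * exp (real n * p * M) * exp (- s * T / \<beta>)"
      by (simp add: exp_add[symmetric])
    also have "\<dots> \<le> exp (s * N0) * exp (e / 2 * ln (real n)) * (p / t) powr e"
      using \<open>real n * p * M \<le> e / 2 * ln (real n)\<close> tail_p by (intro mult_mono mult_left_mono) auto
    finally have "real n * p * exp (s * N0 + real n * p * M - s * T / \<beta>)
        \<le> real n * p * (exp (s * N0) * exp (e / 2 * ln (real n)) * (p / t) powr e)"
      using \<open>0 \<le> p\<close> by (intro mult_left_mono) auto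
    also have "\<dots> = l * exp (s * N0) * (ln (real n) * exp (e / 2 * ln (real n)) * (p / t) powr e)"
      unfolding np by (simp add: algebra_simps)
    also have "p / t = l * ln (real n) / (t * real n)"
      by (simp add: p_def)
    finally show ?thesis .
  qed
  moreover have "1 - (exp (real k - real n * p / 2) + real n * p * exp (s * N0 + real n * p * M - s * T / \<beta>))
    \<le> measure (PiM ({..<n} \<times> {..<n}) (\<lambda>_. N))
        {g \<in> space (PiM ({..<n} \<times> {..<n}) (\<lambda>_. N)).
          \<forall>S. top_direct_set n g k S \<longrightarrow> c * ln (real n) \<le> real (throughput n g N0 \<beta> S)}"
    unfolding p_def T(2)[symmetric]
    by (rule prob_iid_throughput_ge[OF nonpos s mgf M N0 \<beta> k(3,1)])
  ultimately show ?thesis unfolding k_def by linarith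
qed

end

theorem iid_throughput_ge_log_whp:
  fixes N :: "real measure" and N0 \<beta> s a t :: real
  assumes N: "prob_space N" and sets_N: "sets N = sets borel" and nonpos: "emeasure N {..0} = 0"
    and s: "0 < s" and mgf: "(\<integral>\<^sup>+v. ennreal (exp (s * v)) \<partial>N) < \<infinity>"
    and a: "0 < a" and t: "0 < t" and tail: "\<And>x. 0 \<le> x \<Longrightarrow> t * exp (- a * x) \<le> measure N {x<..}"
    and attain: "\<And>p. 0 < p \<Longrightarrow> p < 1 \<Longrightarrow> \<exists>T\<ge>0. measure N {T<..} = p"
    and N0: "0 \<le> N0" and \<beta>: "0 < \<beta>"
  shows "\<exists>c>0. \<exists>k :: nat \<Rightarrow> nat. (\<forall>n. k n \<le> n) \<and>
    (\<lambda>n. measure (PiM ({..<n} \<times> {..<n}) (\<lambda>_. N))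
        {g \<in> space (PiM ({..<n} \<times> {..<n}) (\<lambda>_. N)).
           \<forall>S. top_direct_set n g (k n) S \<longrightarrow> real (throughput n g N0 \<beta> S) \<ge> c * ln (real n)})
    \<longlonglongrightarrow> 1"
proof -
  obtain M where mgf_M: "(\<integral>\<^sup>+v. ennreal (exp (s * v)) \<partial>N) = ennreal M" and M: "0 \<le> M"
    using mgf by (auto simp: less_top_ennreal)
  obtain T where T: "\<And>p. 0 < p \<Longrightarrow> p < 1 \<Longrightarrow> 0 \<le> T p \<and> measure N {T p<..} = p"
    using attain by metis
  define e where "e = s / (a * \<beta>)"
  define l where "l = e / (2 * (M + 1))"
  define c where "c = l / 4"
  define k where "k n = min n (nat \<lceil>c * ln (real n)\<rceil>)" for n :: nat
  define U where "U n = exp (1 - c * ln (real n)) + l * exp (s * N0)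
    * (ln (real n) * exp (e / 2 * ln (real n)) * (l * ln (real n) / (t * real n)) powr e)" for n :: nat
  define E where "E n = {g \<in> space (PiM ({..<n} \<times> {..<n}) (\<lambda>_. N)).
    \<forall>S. top_direct_set n g (k n) S \<longrightarrow> real (throughput n g N0 \<beta> S) \<ge> c * ln (real n)}" for n
  have e: "0 < e" using s a \<beta> by (simp add: e_def)
  have l: "0 < l" "l * M \<le> e / 2" using e M by (auto simp: l_def field_simps)
  have c: "0 < c" using l by (simp add: c_def)
  have bound: "1 - U n \<le> measure (PiM ({..<n} \<times> {..<n}) (\<lambda>_. N)) (E n)"
    if p: "0 < l * ln (real n) / real n" "l * ln (real n) / real n < 1"
      and n: "2 \<le> c * ln (real n)" "c * ln (real n) + 1 \<le> real n" for n
  proof -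
    have k: "k n = nat \<lceil>c * ln (real n)\<rceil>" using n by (simp add: k_def)
    from T[OF p] have "0 \<le> T (l * ln (real n) / real n)"
      and "measure N {T (l * ln (real n) / real n)<..} = l * ln (real n) / real n" by auto
    from prob_iid_throughput_ge_log[OF N sets_N nonpos less_imp_le[OF s] mgf_M M a t tail N0 \<beta>
        l[unfolded e_def] n(1)[unfolded c_def] this]
    show ?thesis unfolding U_def E_def k c_def e_def .
  qed
  have "\<forall>\<^sub>F n in sequentially. 0 < l * ln (real n) / real n \<and> l * ln (real n) / real n < 1
      \<and> 2 \<le> c * ln (real n) \<and> c * ln (real n) + 1 \<le> real n"
    using l c by (intro eventually_conj; real_asymp)
  then have lower: "\<forall>\<^sub>F n in sequentially. 1 - U n \<le> measure (PiM ({..<n} \<times> {..<n}) (\<lambda>_. N)) (E n)"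
    by (rule eventually_mono) (use bound in blast)
  have upper: "\<forall>\<^sub>F n in sequentially. measure (PiM ({..<n} \<times> {..<n}) (\<lambda>_. N)) (E n) \<le> 1"
    by (simp add: prob_space.prob_le_1[OF prob_space_PiM[OF N]])
  have "(\<lambda>n. 1 - U n) \<longlonglongrightarrow> 1"
    using tendsto_diff[OF tendsto_const[of 1] failure_bound_tendsto_zero[OF c e l(1) t]]
    by (simp add: U_def)
  then have "(\<lambda>n. measure (PiM ({..<n} \<times> {..<n}) (\<lambda>_. N)) (E n)) \<longlonglongrightarrow> 1"
    by (rule tendsto_sandwich[OF lower upper _ tendsto_const])
  moreover have "\<forall>n. k n \<le> n" by (simp add: k_def)
  ultimately show ?thesis using c unfolding E_def by blast
qed

theorem corollary1:
  fixes m \<Omega> N0 \<beta> :: real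
  assumes "m > 0" and "\<Omega> > 0" and "N0 \<ge> 0" and "\<beta> > 0"
  shows "\<exists>c > 0. \<exists>k :: nat \<Rightarrow> nat. (\<forall>n. k n \<le> n) \<and>
    (\<lambda>n. measure (channel_space m \<Omega> n)
        {g \<in> space (channel_space m \<Omega> n).
           \<forall>S. top_direct_set n g (k n) S \<longrightarrow> real (throughput n g N0 \<beta> S) \<ge> c * ln (real n)})
    \<longlonglongrightarrow> 1"
proof -
  note m = assms(1) and \<Omega> = assms(2)
  obtain a t where a: "0 < a" and t: "0 < t"
    and tail: "\<And>x. 0 \<le> x \<Longrightarrow> t * exp (- a * x) \<le> measure (nakagami_power m \<Omega>) {x<..}"
    using nakagami_power_tail_exp_lower_bound[OF m \<Omega>] by blast
  have mgf: "(\<integral>\<^sup>+v. ennreal (exp (m / (2 * \<Omega>) * v)) \<partial>nakagami_power m \<Omega>) < \<infinity>"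
    using m \<Omega> by (subst nn_integral_exp_nakagami_power) (auto simp: field_simps)
  have nonpos: "emeasure (nakagami_power m \<Omega>) {..0} = 0"
    by (rule emeasure_nakagami_power_nonpos[OF m \<Omega>])
  have attain: "\<exists>T\<ge>0. measure (nakagami_power m \<Omega>) {T<..} = p" if "0 < p" "p < 1" for p
    using real_distribution_tail_attains[OF real_distribution_nakagami_power[OF m \<Omega>]
        measure_nakagami_power_singleton[OF m \<Omega>] _ that] nonpos
    by (simp add: measure_def)
  have s: "0 < m / (2 * \<Omega>)" using m \<Omega> by simp
  show ?thesis
    unfolding channel_space_def
    by (rule iid_throughput_ge_log_whp[OF prob_space_nakagami_power[OF m \<Omega>] sets_nakagami_power[OF m \<Omega>]
          nonpos s mgf a t tail attain assms(3,4)])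
qed

end
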